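(* Let $\mathsf V$ be a variety, $h:\mathbf F_{\mathsf V}(z)\to\prod_{k=1}^m\mathbf E_k$ an algebraic e-generalization problem, and $g:\mathbf F_{\mathsf V}(z)\to\mathbf P$, $g':\mathbf F_{\mathsf V}(z)\to\mathbf P'$ solutions of $h$. Then: (1) if $g'\sqsubseteq g$, then $\ker(g)\subseteq\ker(g')$; (2) if $\ker(g)\subseteq\ker(g')$, then $g'\sqsubseteq n_{\ker(g)}$.
   Context: $\mathbf F_{\mathsf V}(z)$ is the free algebra of the variety $\mathsf V$ on one generator $z$. An algebra is projective in $\mathsf V$ iff it is a retract of a free algebra; exact if isomorphic to a finitely generated subalgebra of a finitely generated free algebra of $\mathsf V$. An algebraic e-generalization problem is a homomorphism $h:\mathbf F_{\mathsf V}(z)\to\prod_{k=1}^m\mathbf E_k$ with each $\mathbf E_k$ 1-generated exact and each $p_k\circ h$ surjective. A solution of $h$ is a homomorphism $g:\mathbf F_{\mathsf V}(z)\to\mathbf P$, $\mathbf P$ finitely generated projective, with $f\circ g=h$ for some homomorphism $f$. For homomorphisms $g:\mathbf A\to\mathbf B$, $g':\mathbf A\to\mathbf B'$, $g\sqsubseteq g'$ iff there is a homomorphism $f:\mathbf B'\to\mathbf B$ with $f\circ g'=g$. For a congruence $\theta$, $n_\theta:\mathbf F_{\mathsf V}(z)\to\mathbf F_{\mathsf V}(z)/\theta$ is the natural epimorphism. *)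

theory Defs
  imports Main "HOL-Library.FuncSet"
begin

record ('f, 'a) alg =
  acarrier :: "'a set"
  aops :: "'f \<Rightarrow> 'a list \<Rightarrow> 'a"

definition algebra :: "('f \<Rightarrow> nat) \<Rightarrow> ('f, 'a) alg \<Rightarrow> bool" where
  "algebra ar A \<longleftrightarrow> (\<forall>f xs. length xs = ar f \<and> set xs \<subseteq> acarrier A \<longrightarrow> aops A f xs \<in> acarrier A)"

definition hom :: "('f \<Rightarrow> nat) \<Rightarrow> ('f, 'a) alg \<Rightarrow> ('f, 'b) alg \<Rightarrow> ('a \<Rightarrow> 'b) \<Rightarrow> bool" where
  "hom ar A B h \<longleftrightarrow> h ` acarrier A \<subseteq> acarrier B \<and>
     (\<forall>f xs. length xs = ar f \<and> set xs \<subseteq> acarrier A \<longrightarrow> h (aops A f xs) = aops B f (map h xs))"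

definition iso_algs :: "('f \<Rightarrow> nat) \<Rightarrow> ('f, 'a) alg \<Rightarrow> ('f, 'b) alg \<Rightarrow> bool" where
  "iso_algs ar A B \<longleftrightarrow> (\<exists>h. hom ar A B h \<and> bij_betw h (acarrier A) (acarrier B))"

definition closed_under_ops :: "('f \<Rightarrow> nat) \<Rightarrow> ('f, 'a) alg \<Rightarrow> 'a set \<Rightarrow> bool" where
  "closed_under_ops ar A S \<longleftrightarrow> (\<forall>f xs. length xs = ar f \<and> set xs \<subseteq> S \<longrightarrow> aops A f xs \<in> S)"

definition Sg :: "('f \<Rightarrow> nat) \<Rightarrow> ('f, 'a) alg \<Rightarrow> 'a set \<Rightarrow> 'a set" where
  "Sg ar A G = \<Inter>{S. G \<subseteq> S \<and> S \<subseteq> acarrier A \<and> closed_under_ops ar A S}"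

definition subalg :: "('f, 'a) alg \<Rightarrow> 'a set \<Rightarrow> ('f, 'a) alg" where
  "subalg A S = \<lparr>acarrier = S, aops = aops A\<rparr>"

definition fin_generated :: "('f \<Rightarrow> nat) \<Rightarrow> ('f, 'a) alg \<Rightarrow> bool" where
  "fin_generated ar A \<longleftrightarrow> (\<exists>G. finite G \<and> G \<subseteq> acarrier A \<and> Sg ar A G = acarrier A)"

definition one_generated :: "('f \<Rightarrow> nat) \<Rightarrow> ('f, 'a) alg \<Rightarrow> bool" where
  "one_generated ar A \<longleftrightarrow> (\<exists>e\<in>acarrier A. Sg ar A {e} = acarrier A)"

definition ker :: "('f, 'a) alg \<Rightarrow> ('a \<Rightarrow> 'b) \<Rightarrow> 'a rel" where
  "ker A g = {(x, y). x \<in> acarrier A \<and> y \<in> acarrier A \<and> g x = g y}"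

definition quot_alg :: "('f, 'a) alg \<Rightarrow> 'a rel \<Rightarrow> ('f, 'a set) alg" where
  "quot_alg A \<theta> = \<lparr>acarrier = acarrier A // \<theta>,
      aops = (\<lambda>f cs. \<theta> `` {aops A f (map (\<lambda>c. SOME x. x \<in> c) cs)})\<rparr>"

definition nat_epi :: "'a rel \<Rightarrow> 'a \<Rightarrow> 'a set" where
  "nat_epi \<theta> x = \<theta> `` {x}"

text \<open>Direct product of E_0, ..., E_(m-1) (indices shifted from 1..m to 0..m-1).\<close>
definition prod_alg :: "nat \<Rightarrow> (nat \<Rightarrow> ('f, 'e) alg) \<Rightarrow> ('f, nat \<Rightarrow> 'e) alg" where
  "prod_alg m Es = \<lparr>acarrier = PiE {..<m} (\<lambda>k. acarrier (Es k)),
      aops = (\<lambda>f xs. \<lambda>k. if k < m then aops (Es k) f (map (\<lambda>x. x k) xs) else undefined)\<rparr>"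

datatype ('f, 'v) trm = Var 'v | Fun 'f "('f, 'v) trm list"

fun wf_trm :: "('f \<Rightarrow> nat) \<Rightarrow> ('f, 'v) trm \<Rightarrow> bool" where
  "wf_trm ar (Var v) = True"
| "wf_trm ar (Fun f ts) = (length ts = ar f \<and> (\<forall>t\<in>set ts. wf_trm ar t))"

fun vars_trm :: "('f, 'v) trm \<Rightarrow> 'v set" where
  "vars_trm (Var v) = {v}"
| "vars_trm (Fun f ts) = (\<Union>t\<in>set ts. vars_trm t)"

fun eval_trm :: "('f, 'a) alg \<Rightarrow> ('v \<Rightarrow> 'a) \<Rightarrow> ('f, 'v) trm \<Rightarrow> 'a" where
  "eval_trm A \<sigma> (Var v) = \<sigma> v"
| "eval_trm A \<sigma> (Fun f ts) = aops A f (map (eval_trm A \<sigma>) ts)"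

fun subst_trm :: "('v \<Rightarrow> ('f, 'w) trm) \<Rightarrow> ('f, 'v) trm \<Rightarrow> ('f, 'w) trm" where
  "subst_trm \<sigma> (Var v) = \<sigma> v"
| "subst_trm \<sigma> (Fun f ts) = Fun f (map (subst_trm \<sigma>) ts)"

text \<open>A variety is given (Birkhoff) by a set of identities in countably many variables.\<close>
definition eq_theory :: "('f \<Rightarrow> nat) \<Rightarrow> (('f, nat) trm \<times> ('f, nat) trm) set \<Rightarrow> bool" where
  "eq_theory ar E \<longleftrightarrow> (\<forall>(s, t)\<in>E. wf_trm ar s \<and> wf_trm ar t)"

definition in_variety :: "('f \<Rightarrow> nat) \<Rightarrow> (('f, nat) trm \<times> ('f, nat) trm) set \<Rightarrow> ('f, 'a) alg \<Rightarrow> bool" where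
  "in_variety ar E A \<longleftrightarrow> algebra ar A \<and>
     (\<forall>(s, t)\<in>E. \<forall>\<sigma>. (\<forall>v. \<sigma> v \<in> acarrier A) \<longrightarrow> eval_trm A \<sigma> s = eval_trm A \<sigma> t)"

inductive eqc :: "('f \<Rightarrow> nat) \<Rightarrow> (('f, nat) trm \<times> ('f, nat) trm) set \<Rightarrow> ('f, 'v) trm \<Rightarrow> ('f, 'v) trm \<Rightarrow> bool"
  for ar E where
  eqc_refl: "wf_trm ar t \<Longrightarrow> eqc ar E t t"
| eqc_sym: "eqc ar E s t \<Longrightarrow> eqc ar E t s"
| eqc_trans: "eqc ar E s t \<Longrightarrow> eqc ar E t u \<Longrightarrow> eqc ar E s u"
| eqc_cong: "length ss = ar f \<Longrightarrow> length ts = ar f \<Longrightarrow> (\<forall>i<ar f. eqc ar E (ss ! i) (ts ! i))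
     \<Longrightarrow> eqc ar E (Fun f ss) (Fun f ts)"
| eqc_inst: "(s, t) \<in> E \<Longrightarrow> (\<forall>v. wf_trm ar (\<sigma> v)) \<Longrightarrow> eqc ar E (subst_trm \<sigma> s) (subst_trm \<sigma> t)"

definition trm_class :: "('f \<Rightarrow> nat) \<Rightarrow> (('f, nat) trm \<times> ('f, nat) trm) set \<Rightarrow> ('f, 'v) trm \<Rightarrow> ('f, 'v) trm set" where
  "trm_class ar E t = {s. eqc ar E t s}"

definition free_alg :: "('f \<Rightarrow> nat) \<Rightarrow> (('f, nat) trm \<times> ('f, nat) trm) set \<Rightarrow> 'v set \<Rightarrow> ('f, ('f, 'v) trm set) alg" where
  "free_alg ar E X = \<lparr>acarrier = {trm_class ar E t | t. wf_trm ar t \<and> vars_trm t \<subseteq> X},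
      aops = (\<lambda>f cs. trm_class ar E (Fun f (map (\<lambda>c. SOME t. t \<in> c) cs)))\<rparr>"

text \<open>P is projective in V: P is in V and a retract of a free algebra of V.
  Free generators are taken from the type 'a \<times> nat, which is large enough for any
  retract of a free algebra onto P.\<close>
definition projective :: "('f \<Rightarrow> nat) \<Rightarrow> (('f, nat) trm \<times> ('f, nat) trm) set \<Rightarrow> ('f, 'a) alg \<Rightarrow> bool" where
  "projective ar E P \<longleftrightarrow> in_variety ar E P \<and>
     (\<exists>(X :: ('a \<times> nat) set) i r. hom ar P (free_alg ar E X) i \<and> hom ar (free_alg ar E X) P r \<and>
        (\<forall>x\<in>acarrier P. r (i x) = x))"

definition exact :: "('f \<Rightarrow> nat) \<Rightarrow> (('f, nat) trm \<times> ('f, nat) trm) set \<Rightarrow> ('f, 'a) alg \<Rightarrow> bool" where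
  "exact ar E A \<longleftrightarrow> (\<exists>(n :: nat) G. finite G \<and> G \<subseteq> acarrier (free_alg ar E {..<n}) \<and>
      iso_algs ar A (subalg (free_alg ar E {..<n}) (Sg ar (free_alg ar E {..<n}) G)))"

abbreviation Fz :: "('f \<Rightarrow> nat) \<Rightarrow> (('f, nat) trm \<times> ('f, nat) trm) set \<Rightarrow> ('f, ('f, unit) trm set) alg" where
  "Fz ar E \<equiv> free_alg ar E (UNIV :: unit set)"

definition egen_problem :: "('f \<Rightarrow> nat) \<Rightarrow> (('f, nat) trm \<times> ('f, nat) trm) set \<Rightarrow> nat \<Rightarrow>
    (nat \<Rightarrow> ('f, 'e) alg) \<Rightarrow> (('f, unit) trm set \<Rightarrow> nat \<Rightarrow> 'e) \<Rightarrow> bool" where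
  "egen_problem ar E m Es h \<longleftrightarrow> hom ar (Fz ar E) (prod_alg m Es) h \<and>
     (\<forall>k<m. one_generated ar (Es k) \<and> exact ar E (Es k) \<and>
        (\<lambda>x. h x k) ` acarrier (Fz ar E) = acarrier (Es k))"

definition solution :: "('f \<Rightarrow> nat) \<Rightarrow> (('f, nat) trm \<times> ('f, nat) trm) set \<Rightarrow> nat \<Rightarrow>
    (nat \<Rightarrow> ('f, 'e) alg) \<Rightarrow> (('f, unit) trm set \<Rightarrow> nat \<Rightarrow> 'e) \<Rightarrow> ('f, 'p) alg \<Rightarrow> (('f, unit) trm set \<Rightarrow> 'p) \<Rightarrow> bool" where
  "solution ar E m Es h P g \<longleftrightarrow> fin_generated ar P \<and> projective ar E P \<and> hom ar (Fz ar E) P g \<and>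
     (\<exists>f. hom ar P (prod_alg m Es) f \<and> (\<forall>x\<in>acarrier (Fz ar E). f (g x) = h x))"

definition gen_leq :: "('f \<Rightarrow> nat) \<Rightarrow> ('f, 'a) alg \<Rightarrow> ('f, 'b) alg \<Rightarrow> ('f, 'c) alg \<Rightarrow> ('a \<Rightarrow> 'b) \<Rightarrow> ('a \<Rightarrow> 'c) \<Rightarrow> bool" where
  "gen_leq ar A B B' g g' \<longleftrightarrow> (\<exists>f. hom ar B' B f \<and> (\<forall>x\<in>acarrier A. f (g' x) = g x))"

end

theory Submission
  imports Defs
begin

text \<open>If \<open>g' = f \<circ> g\<close> on \<open>F\<^sub>V(z)\<close>, then \<open>g'\<close> is
  constant on the kernel classes of \<open>g\<close>. Conversely, if \<open>ker g \<subseteq> ker g'\<close>, the homomorphism theorem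
  factors \<open>g'\<close> through \<open>F\<^sub>V(z)/ker g\<close>: evaluate \<open>g'\<close> at any representative of a class. This is
  well defined and a homomorphism because the operations of the quotient are themselves computed
  on representatives, so the only non-trivial input is that \<open>F\<^sub>V(z)\<close> is closed under its operations.\<close>

lemma trm_class_eq: "eqc ar E s t \<Longrightarrow> trm_class ar E s = trm_class ar E t"
  unfolding trm_class_def by (blast intro: eqc_sym eqc_trans)

lemma some_in_trm_class:
  assumes "wf_trm ar t"
  shows "eqc ar E t (SOME s. s \<in> trm_class ar E t)"
proof -
  have "t \<in> trm_class ar E t" using assms by (simp add: trm_class_def eqc_refl)
  then show ?thesis by (metis someI trm_class_def mem_Collect_eq)
qed

text \<open>A representative chosen by \<open>SOME\<close> may contain variables outside \<open>X\<close> (identities need not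
  preserve variables), so closure is shown via the given representatives instead.\<close>
lemma algebra_free_alg:
  fixes ar :: "'f \<Rightarrow> nat" and X :: "'v set"
  shows "algebra ar (free_alg ar E X)"
  unfolding algebra_def
proof (intro allI impI)
  fix f and cs :: "('f, 'v) trm set list"
  assume cs: "length cs = ar f \<and> set cs \<subseteq> acarrier (free_alg ar E X)"
  then have "\<forall>c\<in>set cs. \<exists>t. wf_trm ar t \<and> vars_trm t \<subseteq> X \<and> c = trm_class ar E t"
    by (auto simp: free_alg_def)
  then obtain rep where rep: "\<And>c. c \<in> set cs \<Longrightarrow>
      wf_trm ar (rep c) \<and> vars_trm (rep c) \<subseteq> X \<and> c = trm_class ar E (rep c)"
    by metis
  define ts where "ts = map rep cs"
  have "\<forall>i<ar f. eqc ar E (ts ! i) (map (\<lambda>c. SOME t. t \<in> c) cs ! i)"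
    using cs rep some_in_trm_class by (metis nth_map nth_mem ts_def)
  then have "eqc ar E (Fun f ts) (Fun f (map (\<lambda>c. SOME t. t \<in> c) cs))"
    using cs by (intro eqc_cong) (auto simp: ts_def)
  then have "aops (free_alg ar E X) f cs = trm_class ar E (Fun f ts)"
    by (simp add: free_alg_def trm_class_eq)
  moreover have "wf_trm ar (Fun f ts) \<and> vars_trm (Fun f ts) \<subseteq> X"
    using cs rep by (auto simp: ts_def)
  ultimately show "aops (free_alg ar E X) f cs \<in> acarrier (free_alg ar E X)"
    unfolding free_alg_def alg.select_convs by blast
qed

lemma equiv_ker: "equiv (acarrier A) (ker A g)"
  by (auto simp: ker_def equiv_def refl_on_def sym_def trans_def)

lemma gen_leq_ker_subset: "gen_leq ar A B C g g' \<Longrightarrow> ker A g' \<subseteq> ker A g"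
  by (auto simp: gen_leq_def ker_def) metis

lemma some_in_equiv_class:
  assumes "equiv S \<theta>" and "c \<in> S // \<theta>"
  shows "(SOME y. y \<in> c) \<in> c"
  using in_quotient_imp_non_empty[OF assms] by (simp add: some_in_eq)

lemma hom_quot_alg_rep:
  assumes alg: "algebra ar A" and \<theta>: "equiv (acarrier A) \<theta>" "\<theta> \<subseteq> ker A g"
    and g: "hom ar A B g"
  shows "hom ar (quot_alg A \<theta>) B (\<lambda>c. g (SOME y. y \<in> c))"
proof -
  have rep: "(SOME y. y \<in> \<theta> `` {x}) \<in> acarrier A \<and> g (SOME y. y \<in> \<theta> `` {x}) = g x"
    if "x \<in> acarrier A" for x
    using some_in_equiv_class[OF \<theta>(1) quotientI[OF that]] \<theta>(2) by (auto simp: ker_def)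
  have rep_carrier: "(SOME y. y \<in> c) \<in> acarrier A" if "c \<in> acarrier A // \<theta>" for c
    using that rep by (auto elim: quotientE)
  show ?thesis
    unfolding hom_def
  proof (intro conjI allI impI)
    show "(\<lambda>c. g (SOME y. y \<in> c)) ` acarrier (quot_alg A \<theta>) \<subseteq> acarrier B"
      using rep_carrier g by (auto simp: hom_def quot_alg_def)
  next
    fix f cs assume cs: "length cs = ar f \<and> set cs \<subseteq> acarrier (quot_alg A \<theta>)"
    define xs where "xs = map (\<lambda>c. SOME y. y \<in> c) cs"
    have xs: "length xs = ar f" "set xs \<subseteq> acarrier A"
      using cs rep_carrier by (auto simp: xs_def quot_alg_def)
    then have "aops A f xs \<in> acarrier A" using alg by (simp add: algebra_def)
    then have "g (SOME y. y \<in> aops (quot_alg A \<theta>) f cs) = g (aops A f xs)"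
      using rep by (simp add: quot_alg_def xs_def)
    also have "\<dots> = aops B f (map g xs)" using g xs by (simp add: hom_def)
    finally show "g (SOME y. y \<in> aops (quot_alg A \<theta>) f cs) =
        aops B f (map (\<lambda>c. g (SOME y. y \<in> c)) cs)"
      by (simp add: xs_def comp_def)
  qed
qed

lemma gen_leq_nat_epi:
  assumes "algebra ar A" and "equiv (acarrier A) \<theta>" and "\<theta> \<subseteq> ker A g" and "hom ar A B g"
  shows "gen_leq ar A B (quot_alg A \<theta>) g (nat_epi \<theta>)"
proof -
  have "g (SOME y. y \<in> nat_epi \<theta> x) = g x" if "x \<in> acarrier A" for x
    using some_in_equiv_class[OF assms(2) quotientI[OF that]] assms(3)
    by (auto simp: nat_epi_def ker_def)
  then show ?thesis
    using hom_quot_alg_rep[OF assms] unfolding gen_leq_def by blast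
qed

theorem proposition4p16:
  fixes ar :: "'f \<Rightarrow> nat"
    and E :: "(('f, nat) trm \<times> ('f, nat) trm) set"
    and m :: nat
    and Es :: "nat \<Rightarrow> ('f, 'e) alg"
    and h :: "('f, unit) trm set \<Rightarrow> nat \<Rightarrow> 'e"
    and P :: "('f, 'p) alg" and g :: "('f, unit) trm set \<Rightarrow> 'p"
    and P' :: "('f, 'q) alg" and g' :: "('f, unit) trm set \<Rightarrow> 'q"
  assumes "eq_theory ar E"
    and "egen_problem ar E m Es h"
    and "solution ar E m Es h P g"
    and "solution ar E m Es h P' g'"
  shows "(gen_leq ar (Fz ar E) P' P g' g \<longrightarrow> ker (Fz ar E) g \<subseteq> ker (Fz ar E) g')
       \<and> (ker (Fz ar E) g \<subseteq> ker (Fz ar E) g' \<longrightarrow>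
            gen_leq ar (Fz ar E) P' (quot_alg (Fz ar E) (ker (Fz ar E) g)) g' (nat_epi (ker (Fz ar E) g)))"
proof (intro conjI impI)
  show "gen_leq ar (Fz ar E) P' P g' g \<Longrightarrow> ker (Fz ar E) g \<subseteq> ker (Fz ar E) g'"
    by (rule gen_leq_ker_subset)
next
  assume "ker (Fz ar E) g \<subseteq> ker (Fz ar E) g'"
  moreover have "hom ar (Fz ar E) P' g'"
    using assms(4) by (simp add: solution_def)
  ultimately show "gen_leq ar (Fz ar E) P' (quot_alg (Fz ar E) (ker (Fz ar E) g)) g'
      (nat_epi (ker (Fz ar E) g))"
    using gen_leq_nat_epi algebra_free_alg equiv_ker by blast
qed

end
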